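(* Let $N,a,d,q$ be positive integers and let $-1/2\leq\kappa\leq 1/2$. Then $$\widehat{F_{N,d}}\Big(\frac aq+\kappa\Big)=\frac{1}{\phi(dq)}\sum_{\chi \bmod dq} e\Big(\frac{\kappa}{d}\Big) S_{dN+1}\Big(\frac{\kappa}{d},\chi\Big)G_{a,q,d,\chi}+O\big(\log(dN)\log q\big),$$ where the sum is over all Dirichlet characters modulo $dq$, and the implied constant is absolute.
   Context: $e(\theta)=e^{2\pi i\theta}$. For $f\in\ell^1(\mathbb Z)$, $\widehat f(\theta)=\sum_{x\in\mathbb Z}f(x)e(-x\theta)$ for $\theta\in\mathbb T=\mathbb R/\mathbb Z$. $\Lambda$ is the von Mangoldt function and $\phi$ Euler's totient function. For positive integers $N,d$, $F_{N,d}(n)=\Lambda(dn+1)1_{[N]}(n)$, where $1_{[N]}$ is the indicator of $\{1,\dots,N\}$. For a Dirichlet character $\chi$, real $x$ and $\delta$, $S_x(\delta,\chi)=\sum_{n\leq x}\Lambda(n)\chi(n)e(-n\delta)$. For a Dirichlet character $\chi$ modulo $dq$, $G_{a,q,d,\chi}=\sum_{m=0}^{q-1}e(-am/q)\overline{\chi}(dm+1)$. *)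

theory Defs
  imports "HOL-Analysis.Analysis" "HOL-Number_Theory.Number_Theory"
begin

definition e :: "real \<Rightarrow> complex" where
  "e \<theta> = cis (2 * pi * \<theta>)"

definition dirichlet_char :: "nat \<Rightarrow> (nat \<Rightarrow> complex) \<Rightarrow> bool" where
  "dirichlet_char m \<psi> \<longleftrightarrow> m > 0 \<and> \<psi> 1 = 1 \<and>
     (\<forall>a b. \<psi> (a * b) = \<psi> a * \<psi> b) \<and>
     (\<forall>n. \<psi> (n + m) = \<psi> n) \<and>
     (\<forall>n. \<psi> n = 0 \<longleftrightarrow> \<not> coprime n m)"

definition dchars :: "nat \<Rightarrow> (nat \<Rightarrow> complex) set" where
  "dchars m = {\<psi>. dirichlet_char m \<psi>}"

text \<open>Fourier transform of F_{N,d}(n) = Lambda(dn+1) 1_[N](n).\<close>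
definition F_hat :: "nat \<Rightarrow> nat \<Rightarrow> real \<Rightarrow> complex" where
  "F_hat N d \<theta> = (\<Sum>n\<in>{1..N}. mangoldt (d * n + 1) * e (- real n * \<theta>))"

definition S_sum :: "real \<Rightarrow> real \<Rightarrow> (nat \<Rightarrow> complex) \<Rightarrow> complex" where
  "S_sum x \<delta> \<psi> = (\<Sum>n\<in>{1..nat \<lfloor>x\<rfloor>}. mangoldt n * \<psi> n * e (- real n * \<delta>))"

definition G_sum :: "nat \<Rightarrow> nat \<Rightarrow> nat \<Rightarrow> (nat \<Rightarrow> complex) \<Rightarrow> complex" where
  "G_sum a q d \<psi> = (\<Sum>m<q. e (- real a * real m / real q) * cnj (\<psi> (d * m + 1)))"

end

theory Submission
  imports Defs "HOL-Algebra.Multiplicative_Group"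
begin

text \<open>Expanding \<open>S\<close> and \<open>G\<close>, the main term becomes a sum over \<open>n \<le> X = dN + 1\<close> and \<open>m < q\<close>
  of \<open>\<Lambda>(n)\<close> times a phase times the character sum of \<open>\<chi>(n) cnj(\<chi>(dm + 1))\<close> modulo \<open>dq\<close>.
  By orthogonality this picks out exactly \<open>n = dk + 1\<close> with \<open>m = k mod q\<close> and \<open>n\<close> coprime to \<open>q\<close>,
  and for these the phases recombine to \<open>e(-k(a/q + \<kappa>))\<close>. So the main term is \<open>F_hat\<close> without
  the terms whose \<open>dk + 1\<close> shares a prime with \<open>q\<close>. Each prime \<open>p\<close> dividing \<open>q\<close> accounts for at
  most \<open>log X\<close> (the von Mangoldt weights of the powers of \<open>p\<close> up to \<open>X\<close>), and \<open>q\<close> has at most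
  \<open>log q / log 2\<close> prime factors.

  Orthogonality needs enough characters; they are built by extending characters of the unit
  group modulo \<open>dq\<close> one element at a time.\<close>

section \<open>Characters of finite abelian groups\<close>

definition group_char_on :: "('a, 'b) monoid_scheme \<Rightarrow> 'a set \<Rightarrow> ('a \<Rightarrow> complex) \<Rightarrow> bool" where
  "group_char_on G H c \<longleftrightarrow>
     (\<forall>x\<in>H. c x \<noteq> 0) \<and> (\<forall>x\<in>H. \<forall>y\<in>H. c (x \<otimes>\<^bsub>G\<^esub> y) = c x * c y)"

definition adjoin :: "('a, 'b) monoid_scheme \<Rightarrow> 'a set \<Rightarrow> 'a \<Rightarrow> 'a set" where
  "adjoin G H g = {h \<otimes>\<^bsub>G\<^esub> g [^]\<^bsub>G\<^esub> (j::nat) | h j. h \<in> H}"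

lemma adjoinI: "h \<in> H \<Longrightarrow> h \<otimes>\<^bsub>G\<^esub> g [^]\<^bsub>G\<^esub> (j::nat) \<in> adjoin G H g"
  unfolding adjoin_def by blast

lemma adjoinE:
  assumes "x \<in> adjoin G H g"
  obtains h and j :: nat where "h \<in> H" "x = h \<otimes>\<^bsub>G\<^esub> g [^]\<^bsub>G\<^esub> j"
  using assms unfolding adjoin_def by blast

context comm_group
begin

lemma group_char_on_one:
  assumes "group_char_on G H c" "subgroup H G"
  shows "c \<one> = 1"
proof -
  have "\<one> \<in> H" using assms(2) by (rule subgroup.one_closed)
  then have "c (\<one> \<otimes> \<one>) = c \<one> * c \<one>" "c \<one> \<noteq> 0"
    using assms(1) unfolding group_char_on_def by blast+
  then show ?thesis by simp
qed

lemma exists_least_pow_in_subgroup: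
  assumes "finite (carrier G)" "subgroup H G" "g \<in> carrier G"
  obtains k :: nat where "k > 0" "g [^] k \<in> H" "\<And>j. 0 < j \<Longrightarrow> j < k \<Longrightarrow> g [^] j \<notin> H"
proof -
  have ex: "\<exists>j::nat. 0 < j \<and> g [^] j \<in> H"
  proof (intro exI conjI)
    show "0 < ord g" "g [^] ord g \<in> H"
      using ord_ge_1[OF assms(1,3)] pow_ord_eq_1[OF assms(3)] subgroup.one_closed[OF assms(2)] by auto
  qed
  define k where "k = (LEAST j::nat. 0 < j \<and> g [^] j \<in> H)"
  show ?thesis
  proof
    show "0 < k" "g [^] k \<in> H"
      using LeastI_ex[OF ex] unfolding k_def by auto
    show "g [^] j \<notin> H" if "0 < j" "j < k" for j
      using not_less_Least[of j "\<lambda>j. 0 < j \<and> g [^] j \<in> H"] that unfolding k_def by blast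
  qed
qed

lemma inv_eq_nat_pow:
  assumes "finite (carrier G)" "x \<in> carrier G"
  shows "inv x = x [^] (ord x - 1)"
proof (rule inv_equality)
  have "x [^] (ord x - 1) \<otimes> x = x [^] ord x"
    using ord_ge_1[OF assms] nat_pow_Suc[of x "ord x - 1"] by simp
  then show "x [^] (ord x - 1) \<otimes> x = \<one>" using assms(2) by simp
qed (use assms in auto)

text \<open>Adjoining an element \<open>g\<close> to the domain \<open>H\<close> of a character \<open>c\<close>: if \<open>k\<close> is the order of \<open>g\<close>
  modulo \<open>H\<close>, the value at \<open>g\<close> may be any \<open>k\<close>-th root of \<open>c (g [^] k)\<close>.\<close>

context
  fixes H c g k w
  assumes fin: "finite (carrier G)" and H: "subgroup H G" and c: "group_char_on G H c"
    and g: "g \<in> carrier G" and k: "k > 0" "g [^] k \<in> H"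
    and k_least: "\<And>j. 0 < j \<Longrightarrow> j < k \<Longrightarrow> g [^] j \<notin> H"
    and w: "w ^ k = c (g [^] k)"
begin

lemma char_pow_in_subgroup: "g [^] n \<in> H \<Longrightarrow> c (g [^] n) = w ^ n"
proof (induction n rule: less_induct)
  case (less n)
  show ?case
  proof (cases "n < k")
    case True
    then have "n = 0" using k_least less.prems by blast
    then show ?thesis using group_char_on_one[OF c H] by simp
  next
    case False
    have split: "g [^] n = g [^] (n - k) \<otimes> g [^] k"
      using False g by (simp add: nat_pow_mult)
    have "g [^] (n - k) = g [^] n \<otimes> inv (g [^] k)"
      using g by (simp add: split m_assoc)
    then have "g [^] (n - k) \<in> H"
      using H less.prems k by (simp add: subgroup.m_closed subgroup.m_inv_closed)
    then have "c (g [^] n) = w ^ (n - k) * w ^ k"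
      using less.IH[of "n - k"] c k False w unfolding split group_char_on_def by auto
    then show ?thesis using False by (simp add: power_add[symmetric])
  qed
qed

lemma char_adjoin_well_defined:
  assumes "h1 \<in> H" "h2 \<in> H" "h1 \<otimes> g [^] i = h2 \<otimes> g [^] j" "j \<le> i"
  shows "c h1 * w ^ i = c h2 * w ^ j"
proof -
  have carr: "h1 \<in> carrier G" "h2 \<in> carrier G"
    using assms(1,2) H by (auto dest: subgroup.mem_carrier)
  have "(h1 \<otimes> g [^] (i - j)) \<otimes> g [^] j = h2 \<otimes> g [^] j"
    using assms(3,4) carr g by (simp add: m_assoc nat_pow_mult)
  then have "h2 = h1 \<otimes> g [^] (i - j)" using carr g by simp
  moreover have "g [^] (i - j) = inv h1 \<otimes> h2"
    using calculation carr g by (simp add: m_assoc[symmetric])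
  then have "g [^] (i - j) \<in> H"
    using assms(1,2) H by (simp add: subgroup.m_closed subgroup.m_inv_closed)
  ultimately have "c h2 = c h1 * w ^ (i - j)"
    using c assms(1) char_pow_in_subgroup unfolding group_char_on_def by auto
  then show ?thesis using assms(4) by (simp add: mult.assoc power_add[symmetric])
qed

lemma subgroup_adjoin: "subgroup (adjoin G H g) G"
proof (rule subgroupI)
  show "adjoin G H g \<subseteq> carrier G"
    using subgroup.subset[OF H] g by (auto elim!: adjoinE)
  show "adjoin G H g \<noteq> {}" using adjoinI[OF subgroup.one_closed[OF H]] by blast
next
  fix x assume "x \<in> adjoin G H g"
  then obtain h and j :: nat where hj: "h \<in> H" "x = h \<otimes> g [^] j" by (rule adjoinE)
  have "h \<in> carrier G" using hj H by (auto dest: subgroup.mem_carrier)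
  have "inv (g [^] j) = (inv g) [^] j" using nat_pow_inv[OF g] by simp
  also have "\<dots> = g [^] ((ord g - 1) * j)" using fin g by (simp add: inv_eq_nat_pow nat_pow_pow)
  finally have "inv x = inv h \<otimes> g [^] ((ord g - 1) * j)"
    using hj g \<open>h \<in> carrier G\<close> by (simp add: inv_mult m_comm)
  then show "inv x \<in> adjoin G H g"
    using hj H by (auto intro: adjoinI subgroup.m_inv_closed)
next
  fix x y assume "x \<in> adjoin G H g" "y \<in> adjoin G H g"
  then obtain h1 h2 and i j :: nat where "h1 \<in> H" "h2 \<in> H" "x = h1 \<otimes> g [^] i" "y = h2 \<otimes> g [^] j"
    by (metis adjoinE)
  moreover then have "x \<otimes> y = (h1 \<otimes> h2) \<otimes> g [^] (i + j)"
    using H g by (simp add: subgroup.mem_carrier m_ac nat_pow_mult[symmetric])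
  ultimately show "x \<otimes> y \<in> adjoin G H g"
    using H by (auto intro: adjoinI subgroup.m_closed)
qed

lemma char_adjoin:
  obtains c' where "group_char_on G (adjoin G H g) c'"
    "\<And>h j. h \<in> H \<Longrightarrow> c' (h \<otimes> g [^] j) = c h * w ^ j"
proof -
  define c' where "c' x = (SOME v. \<exists>h (j::nat). h \<in> H \<and> x = h \<otimes> g [^] j \<and> v = c h * w ^ j)" for x
  have val: "c' (h \<otimes> g [^] j) = c h * w ^ j" if "h \<in> H" for h j
  proof -
    have "\<exists>h' j'. h' \<in> H \<and> h \<otimes> g [^] j = h' \<otimes> g [^] j' \<and> c' (h \<otimes> g [^] j) = c h' * w ^ j'"
      unfolding c'_def by (rule someI_ex) (use that in blast)
    then obtain h' j' where "h' \<in> H" "h \<otimes> g [^] j = h' \<otimes> g [^] j'" "c' (h \<otimes> g [^] j) = c h' * w ^ j'"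
      by blast
    then show ?thesis
      using char_adjoin_well_defined[OF that \<open>h' \<in> H\<close>] char_adjoin_well_defined[OF \<open>h' \<in> H\<close> that]
      by (cases "j' \<le> j") auto
  qed
  have w0: "w \<noteq> 0" using w k c unfolding group_char_on_def by (auto simp: power_0_left)
  have "group_char_on G (adjoin G H g) c'"
    unfolding group_char_on_def
  proof (intro conjI ballI)
    fix x assume "x \<in> adjoin G H g"
    then obtain h and j :: nat where "h \<in> H" "x = h \<otimes> g [^] j" by (rule adjoinE)
    then show "c' x \<noteq> 0" using val[of h j] c w0 unfolding group_char_on_def by auto
  next
    fix x y assume "x \<in> adjoin G H g" "y \<in> adjoin G H g"
    then obtain h1 h2 and i j :: nat where hs: "h1 \<in> H" "h2 \<in> H" and
      xy: "x = h1 \<otimes> g [^] i" "y = h2 \<otimes> g [^] j"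
      by (metis adjoinE)
    then have "h1 \<otimes> g [^] i \<otimes> (h2 \<otimes> g [^] j) = (h1 \<otimes> h2) \<otimes> g [^] (i + j)"
      using H g by (simp add: subgroup.mem_carrier m_ac nat_pow_mult[symmetric])
    then show "c' (x \<otimes> y) = c' x * c' y"
      using hs H c val unfolding xy group_char_on_def
      by (simp add: subgroup.m_closed power_add mult_ac)
  qed
  then show ?thesis using val that by blast
qed

end

lemma char_extend_to_group:
  assumes fin: "finite (carrier G)"
  shows "subgroup H G \<Longrightarrow> group_char_on G H c \<Longrightarrow>
    \<exists>c'. group_char_on G (carrier G) c' \<and> (\<forall>x\<in>H. c' x = c x)"
proof (induction "card (carrier G - H)" arbitrary: H c rule: less_induct)
  case less
  show ?case
  proof (cases "H = carrier G")
    case True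
    then show ?thesis using less.prems by blast
  next
    case False
    then obtain g where g: "g \<in> carrier G" "g \<notin> H"
      using subgroup.subset[OF less.prems(1)] by blast
    obtain k :: nat where k: "k > 0" "g [^] k \<in> H" "\<And>j. 0 < j \<Longrightarrow> j < k \<Longrightarrow> g [^] j \<notin> H"
      using exists_least_pow_in_subgroup[OF fin less.prems(1) g(1)] by blast
    define w where "w = exp (Ln (c (g [^] k)) / k)"
    have "c (g [^] k) \<noteq> 0" using less.prems(2) k(2) unfolding group_char_on_def by blast
    then have w: "w ^ k = c (g [^] k)"
      using k(1) unfolding w_def by (simp flip: exp_of_nat_mult)
    define H' where "H' = adjoin G H g"
    have H': "subgroup H' G"
      unfolding H'_def by (rule subgroup_adjoin[OF fin less.prems g(1) k w])
    obtain c' where c': "group_char_on G H' c'" "\<And>h j. h \<in> H \<Longrightarrow> c' (h \<otimes> g [^] j) = c h * w ^ j"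
      using char_adjoin[OF fin less.prems g(1) k w] unfolding H'_def by blast
    have HH': "x \<in> H'" "c' x = c x" if "x \<in> H" for x
    proof -
      have x: "x \<otimes> g [^] (0::nat) = x"
        using that subgroup.mem_carrier[OF less.prems(1)] by simp
      show "x \<in> H'" using adjoinI[OF that, of G g 0] x unfolding H'_def by simp
      show "c' x = c x" using c'(2)[OF that, of 0] x by simp
    qed
    have "g \<in> H'"
      using adjoinI[OF subgroup.one_closed[OF less.prems(1)], of G g 1] g(1) unfolding H'_def by simp
    then have "carrier G - H' \<subset> carrier G - H"
      using g HH'(1) by blast
    then have "card (carrier G - H') < card (carrier G - H)"
      using fin by (simp add: psubset_card_mono)
    from less.hyps[OF this H' c'(1)] obtain c'' where
      "group_char_on G (carrier G) c''" "\<forall>x\<in>H'. c'' x = c' x"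
      by blast
    with HH' show ?thesis by (intro exI[of _ c'']) simp
  qed
qed

lemma exists_char_ne_1:
  assumes fin: "finite (carrier G)" and x: "x \<in> carrier G" "x \<noteq> \<one>"
  obtains c where "group_char_on G (carrier G) c" "c x \<noteq> 1"
proof -
  have triv: "subgroup {\<one>} G" "group_char_on G {\<one>} (\<lambda>_. 1)"
    by (simp_all add: triv_subgroup group_char_on_def)
  obtain k :: nat where k: "k > 0" "x [^] k \<in> {\<one>}" "\<And>j. 0 < j \<Longrightarrow> j < k \<Longrightarrow> x [^] j \<notin> {\<one>}"
    using exists_least_pow_in_subgroup[OF fin triv(1) x(1)] by blast
  define w where "w = cis (2 * pi / k)"
  have "w ^ k = cis (real k * (2 * pi / real k))"
    unfolding w_def by (rule Complex.DeMoivre)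
  then have w: "w ^ k = (\<lambda>_. 1) (x [^] k)"
    using k(1) by simp
  have "w \<noteq> 1"
  proof
    assume "w = 1"
    then obtain n :: int where "2 * pi / k = of_int (2 * n) * pi"
      by (auto simp: w_def cis_conv_exp exp_eq_1)
    then have "real_of_int (int k * n) = 1"
      using k(1) by (simp add: field_simps)
    then have "int k = 1"
      using k(1) by (simp add: zmult_eq_1_iff del: of_int_mult)
    then show False using k(2) x by simp
  qed
  obtain c' where c': "group_char_on G (adjoin G {\<one>} x) c'"
      "\<And>h j. h \<in> {\<one>} \<Longrightarrow> c' (h \<otimes> x [^] j) = 1 * w ^ j"
    using char_adjoin[OF fin triv x(1) k w] by blast
  obtain c'' where c'': "group_char_on G (carrier G) c''" "\<forall>y\<in>adjoin G {\<one>} x. c'' y = c' y"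
    using char_extend_to_group[OF fin subgroup_adjoin[OF fin triv x(1) k w] c'(1)] by blast
  have x_eq: "\<one> \<otimes> x [^] (1::nat) = x" using x(1) by simp
  then have "x \<in> adjoin G {\<one>} x" using adjoinI[of \<one> "{\<one>}" G x 1] by simp
  moreover have "c' x = w" using c'(2)[of \<one> 1] x_eq by simp
  ultimately show ?thesis using that c'' \<open>w \<noteq> 1\<close> by auto
qed

end

section \<open>Dirichlet characters\<close>

definition units_mod :: "nat \<Rightarrow> nat monoid" where
  "units_mod m = \<lparr>carrier = {x. x < m \<and> coprime x m}, mult = (\<lambda>x y. x * y mod m), one = 1 mod m\<rparr>"

lemma units_mod_simps [simp]:
  "carrier (units_mod m) = {x. x < m \<and> coprime x m}"
  "x \<otimes>\<^bsub>units_mod m\<^esub> y = x * y mod m"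
  "\<one>\<^bsub>units_mod m\<^esub> = 1 mod m"
  by (simp_all add: units_mod_def)

lemma comm_group_units_mod:
  assumes "m > 0"
  shows "comm_group (units_mod m)"
proof (rule comm_groupI)
  fix x assume "x \<in> carrier (units_mod m)"
  then obtain y where y: "[x * y = 1] (mod m)" using cong_solve_coprime_nat by auto
  then have "coprime y m" using cong_imp_coprime[OF cong_sym[OF y]] by simp
  then show "\<exists>y\<in>carrier (units_mod m). y \<otimes>\<^bsub>units_mod m\<^esub> x = \<one>\<^bsub>units_mod m\<^esub>"
    using y assms by (intro bexI[of _ "y mod m"]) (auto simp: cong_def mod_mult_right_eq mult.commute)
qed (use assms in \<open>auto simp: mod_mult_left_eq mod_mult_right_eq ac_simps\<close>)

lemma coprime_add_modulus_left_iff: "coprime (n + m) m \<longleftrightarrow> coprime n m"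
  for n m :: nat
  by (simp only: coprime_iff_gcd_eq_1 gcd_add1)

context
  fixes m :: nat and \<psi> :: "nat \<Rightarrow> complex"
  assumes \<psi>: "dirichlet_char m \<psi>"
begin

lemma dirichlet_char_mod: "\<psi> (n mod m) = \<psi> n"
proof -
  have "\<psi> (r + t * m) = \<psi> r" for r t
  proof (induction t)
    case (Suc t)
    have "\<psi> (r + Suc t * m) = \<psi> (r + t * m + m)" by (simp add: add_ac)
    also have "\<dots> = \<psi> (r + t * m)" using \<psi> by (simp add: dirichlet_char_def)
    finally show ?case using Suc.IH by simp
  qed simp
  from this[of "n mod m" "n div m"] show ?thesis by simp
qed

lemma dirichlet_char_cong: "[a = b] (mod m) \<Longrightarrow> \<psi> a = \<psi> b"
  unfolding cong_def by (metis dirichlet_char_mod)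

lemma dirichlet_char_power: "\<psi> (a ^ n) = \<psi> a ^ n"
  using \<psi> by (induction n) (auto simp: dirichlet_char_def)

lemma dirichlet_char_root_of_unity:
  assumes "coprime b m"
  shows "\<psi> b ^ totient m = 1"
proof -
  have "\<psi> (b ^ totient m) = \<psi> 1"
    by (rule dirichlet_char_cong[OF euler_theorem[OF assms]])
  then show ?thesis using \<psi> by (simp add: dirichlet_char_power dirichlet_char_def)
qed

lemma cnj_mult_dirichlet_char:
  assumes "coprime b m"
  shows "cnj (\<psi> b) * \<psi> b = 1"
proof -
  have "totient m > 0" using \<psi> by (simp add: dirichlet_char_def)
  then have "norm (\<psi> b) = 1"
    using power_eq_1_iff[OF dirichlet_char_root_of_unity[OF assms]] by simp
  then show ?thesis using complex_norm_square[of "\<psi> b"] by (simp add: mult.commute)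
qed

end

lemma finite_dchars:
  assumes "m > 0"
  shows "finite (dchars m)"
proof -
  define R where "R = insert 0 {z :: complex. z ^ totient m = 1}"
  have "finite {z :: complex. z ^ totient m = 1}"
    using assms by (intro finite_roots_unity) (simp add: Suc_le_eq)
  then have "finite R" unfolding R_def by simp
  have "\<psi> n \<in> R" if "\<psi> \<in> dchars m" for \<psi> n
    using that dirichlet_char_root_of_unity[of m \<psi> n]
    unfolding R_def dchars_def dirichlet_char_def by auto
  then have "(\<lambda>\<psi>. restrict \<psi> {..<m}) ` dchars m \<subseteq> PiE {..<m} (\<lambda>_. R)"
    by (intro image_subsetI) (simp add: restrict_PiE_iff)
  moreover have "finite (PiE {..<m} (\<lambda>_. R))"
    using \<open>finite R\<close> by (simp add: finite_PiE)
  ultimately have "finite ((\<lambda>\<psi>. restrict \<psi> {..<m}) ` dchars m)"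
    by (rule finite_subset)
  moreover have "inj_on (\<lambda>\<psi>. restrict \<psi> {..<m}) (dchars m)"
  proof (rule inj_onI, rule ext)
    fix \<psi>1 \<psi>2 n
    assume \<psi>s: "\<psi>1 \<in> dchars m" "\<psi>2 \<in> dchars m" and eq: "restrict \<psi>1 {..<m} = restrict \<psi>2 {..<m}"
    have "\<psi>1 n = \<psi>1 (n mod m)"
      using \<psi>s dirichlet_char_mod[of m \<psi>1 n] unfolding dchars_def by simp
    also have "\<dots> = \<psi>2 (n mod m)"
      using fun_cong[OF eq, of "n mod m"] assms by simp
    also have "\<dots> = \<psi>2 n"
      using \<psi>s dirichlet_char_mod[of m \<psi>2 n] unfolding dchars_def by simp
    finally show "\<psi>1 n = \<psi>2 n" .
  qed
  ultimately show ?thesis by (rule finite_imageD)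
qed

definition principal_dchar :: "nat \<Rightarrow> nat \<Rightarrow> complex" where
  "principal_dchar m n = (if coprime n m then 1 else 0)"

lemma principal_dchar_in_dchars: "m > 0 \<Longrightarrow> principal_dchar m \<in> dchars m"
  by (auto simp: dchars_def dirichlet_char_def principal_dchar_def coprime_add_modulus_left_iff)

lemma mult_in_dchars: "\<psi>1 \<in> dchars m \<Longrightarrow> \<psi>2 \<in> dchars m \<Longrightarrow> (\<lambda>n. \<psi>1 n * \<psi>2 n) \<in> dchars m"
  by (auto simp: dchars_def dirichlet_char_def algebra_simps)

lemma cnj_in_dchars: "\<psi> \<in> dchars m \<Longrightarrow> (\<lambda>n. cnj (\<psi> n)) \<in> dchars m"
  by (auto simp: dchars_def dirichlet_char_def)

lemma exists_dchar_ne_1: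
  assumes "m > 0" "coprime x m" "\<not> [x = 1] (mod m)"
  obtains \<psi> where "\<psi> \<in> dchars m" "\<psi> x \<noteq> 1"
proof -
  interpret U: comm_group "units_mod m" by (rule comm_group_units_mod[OF assms(1)])
  obtain c where c: "group_char_on (units_mod m) (carrier (units_mod m)) c" "c (x mod m) \<noteq> 1"
    using U.exists_char_ne_1[of "x mod m"] assms by (auto simp: cong_def)
  have c1: "c (1 mod m) = 1" using U.group_char_on_one[OF c(1) U.subgroup_self] by simp
  define \<psi> where "\<psi> n = (if coprime n m then c (n mod m) else 0)" for n
  have "\<psi> (a * b) = \<psi> a * \<psi> b" for a b
  proof (cases "coprime a m \<and> coprime b m")
    case True
    then have "c (a mod m * (b mod m) mod m) = c (a mod m) * c (b mod m)"
      using c(1) assms(1) unfolding group_char_on_def by simp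
    then show ?thesis using True by (simp add: \<psi>_def mod_mult_eq)
  qed (auto simp: \<psi>_def)
  then have "\<psi> \<in> dchars m"
    using c(1) c1 assms(1) unfolding dchars_def dirichlet_char_def group_char_on_def
    by (auto simp: \<psi>_def coprime_add_modulus_left_iff)
  moreover have "\<psi> x \<noteq> 1" using c(2) assms(2) by (simp add: \<psi>_def)
  ultimately show ?thesis using that by blast
qed

lemma sum_dchars:
  assumes "m > 0" "coprime x m"
  shows "(\<Sum>\<psi>\<in>dchars m. \<psi> x) = (if [x = 1] (mod m) then of_nat (card (dchars m)) else 0)"
proof (cases "[x = 1] (mod m)")
  case True
  then have "\<psi> x = 1" if "\<psi> \<in> dchars m" for \<psi>
    using that dirichlet_char_cong[of m \<psi> x 1] unfolding dchars_def dirichlet_char_def by auto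
  then have "(\<Sum>\<psi>\<in>dchars m. \<psi> x) = (\<Sum>\<psi>\<in>dchars m. 1)" by (rule sum.cong[OF refl])
  then show ?thesis using True by simp
next
  case False
  obtain \<psi>0 where \<psi>0: "\<psi>0 \<in> dchars m" "\<psi>0 x \<noteq> 1"
    using exists_dchar_ne_1[OF assms False] by blast
  have cancel: "cnj (\<psi>0 n) * (\<psi>0 n * \<psi> n) = \<psi> n" if "\<psi> \<in> dchars m" for \<psi> n
  proof (cases "coprime n m")
    case True
    then show ?thesis using \<psi>0(1) cnj_mult_dirichlet_char[of m \<psi>0 n]
      by (simp add: dchars_def mult.assoc[symmetric])
  next
    case False
    then show ?thesis using that by (simp add: dchars_def dirichlet_char_def)
  qed
  have "bij_betw (\<lambda>\<psi> n. \<psi>0 n * \<psi> n) (dchars m) (dchars m)"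
    by (rule bij_betw_byWitness[where f' = "\<lambda>\<psi> n. cnj (\<psi>0 n) * \<psi> n"])
      (use cancel \<psi>0(1) mult_in_dchars cnj_in_dchars in \<open>auto simp: algebra_simps\<close>)
  then have "(\<Sum>\<psi>\<in>dchars m. \<psi> x) = (\<Sum>\<psi>\<in>dchars m. \<psi>0 x * \<psi> x)"
    by (rule sum.reindex_bij_betw[where g = "\<lambda>\<psi>. \<psi> x", symmetric])
  also have "\<dots> = \<psi>0 x * (\<Sum>\<psi>\<in>dchars m. \<psi> x)"
    by (simp add: sum_distrib_left)
  finally have "(1 - \<psi>0 x) * (\<Sum>\<psi>\<in>dchars m. \<psi> x) = 0"
    by (simp add: left_diff_distrib)
  then show ?thesis using False \<psi>0(2) by simp
qed

lemma card_reduced_residues: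
  assumes "m > 0"
  shows "card {x. x < m \<and> coprime x m} = totient m"
proof (cases "m = 1")
  case True
  then have "{x. x < m \<and> coprime x m} = {0}" by auto
  then show ?thesis using True by simp
next
  case False
  have "x > 0" if "coprime x m" for x
  proof (rule ccontr)
    assume "\<not> x > 0"
    then have "coprime 0 m" using that by simp
    then show False using \<open>m \<noteq> 1\<close> by simp
  qed
  then have "{x. x < m \<and> coprime x m} = totatives m"
    using \<open>m \<noteq> 1\<close> by (auto simp: in_totatives_iff le_less)
  then show ?thesis by (simp add: totient_def)
qed

lemma sum_dchar_reduced_residues:
  assumes "m > 0" "\<psi> \<in> dchars m"
  shows "(\<Sum>x\<in>{x. x < m \<and> coprime x m}. \<psi> x) =
    (if \<psi> = principal_dchar m then of_nat (totient m) else 0)"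
proof (cases "\<psi> = principal_dchar m")
  case True
  then have "(\<Sum>x\<in>{x. x < m \<and> coprime x m}. \<psi> x) = (\<Sum>x\<in>{x. x < m \<and> coprime x m}. 1)"
    by (intro sum.cong) (auto simp: principal_dchar_def)
  then show ?thesis using True card_reduced_residues[OF assms(1)] by simp
next
  case False
  have \<psi>: "dirichlet_char m \<psi>" using assms(2) by (simp add: dchars_def)
  obtain y where y: "coprime y m" "\<psi> y \<noteq> 1"
  proof (rule ccontr)
    assume "\<not> thesis"
    then have "\<psi> n = principal_dchar m n" for n
      using that \<psi> by (auto simp: principal_dchar_def dirichlet_char_def)
    then show False using False by blast
  qed
  define T where "T = {x. x < m \<and> coprime x m}"
  have inj: "inj_on (\<lambda>x. y * x mod m) T"
  proof (rule inj_onI)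
    fix x1 x2 assume "x1 \<in> T" "x2 \<in> T" "y * x1 mod m = y * x2 mod m"
    then show "x1 = x2"
      using cong_mult_lcancel_nat[OF y(1)] by (simp add: T_def cong_def)
  qed
  moreover have "(\<lambda>x. y * x mod m) ` T \<subseteq> T" using assms(1) y(1) by (auto simp: T_def)
  ultimately have "(\<lambda>x. y * x mod m) ` T = T" by (simp add: T_def endo_inj_surj)
  then have "(\<Sum>x\<in>T. \<psi> x) = (\<Sum>x\<in>T. \<psi> (y * x mod m))"
    using sum.reindex[OF inj, of \<psi>] by simp
  also have "\<dots> = \<psi> y * (\<Sum>x\<in>T. \<psi> x)"
    using \<psi> by (simp add: dirichlet_char_mod[OF \<psi>] sum_distrib_left dirichlet_char_def)
  finally have "(1 - \<psi> y) * (\<Sum>x\<in>T. \<psi> x) = 0" by (simp add: left_diff_distrib)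
  then show ?thesis using False y(2) by (simp add: T_def)
qed

lemma card_dchars:
  assumes "m > 0"
  shows "card (dchars m) = totient m"
proof -
  define T where "T = {x. x < m \<and> coprime x m}"
  have "(\<Sum>\<psi>\<in>dchars m. \<Sum>x\<in>T. \<psi> x) = (\<Sum>\<psi>\<in>dchars m. if \<psi> = principal_dchar m then of_nat (totient m) else 0)"
    unfolding T_def using sum_dchar_reduced_residues[OF assms] by (rule sum.cong[OF refl])
  also have "\<dots> = of_nat (totient m)"
    using principal_dchar_in_dchars[OF assms] finite_dchars[OF assms] by simp
  finally have A: "(\<Sum>\<psi>\<in>dchars m. \<Sum>x\<in>T. \<psi> x) = of_nat (totient m)" .
  have "1 mod m \<in> T" using assms by (cases "m = 1") (auto simp: T_def)
  have "(\<Sum>x\<in>T. \<Sum>\<psi>\<in>dchars m. \<psi> x) = (\<Sum>x\<in>T. if x = 1 mod m then of_nat (card (dchars m)) else 0)"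
  proof (rule sum.cong[OF refl])
    fix x assume "x \<in> T"
    then have "[x = 1] (mod m) \<longleftrightarrow> x = 1 mod m" by (simp add: cong_def T_def)
    then show "(\<Sum>\<psi>\<in>dchars m. \<psi> x) = (if x = 1 mod m then of_nat (card (dchars m)) else 0)"
      using sum_dchars[OF assms, of x] \<open>x \<in> T\<close> by (simp add: T_def)
  qed
  also have "\<dots> = of_nat (card (dchars m))"
    using \<open>1 mod m \<in> T\<close> by (simp add: T_def)
  finally have B: "(\<Sum>x\<in>T. \<Sum>\<psi>\<in>dchars m. \<psi> x) = of_nat (card (dchars m))" .
  have "(\<Sum>\<psi>\<in>dchars m. \<Sum>x\<in>T. \<psi> x) = (\<Sum>x\<in>T. \<Sum>\<psi>\<in>dchars m. \<psi> x)"
    by (rule sum.swap)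
  then have "(of_nat (totient m) :: complex) = of_nat (card (dchars m))"
    using A B by simp
  then show ?thesis by (simp only: of_nat_eq_iff)
qed

lemma dchars_orthogonality:
  assumes "m > 0"
  shows "(\<Sum>\<psi>\<in>dchars m. \<psi> n * cnj (\<psi> b)) =
    (if coprime b m \<and> [n = b] (mod m) then of_nat (totient m) else 0)"
proof (cases "coprime b m \<and> coprime n m")
  case False
  then have "\<psi> n * cnj (\<psi> b) = 0" if "\<psi> \<in> dchars m" for \<psi>
    using that by (auto simp: dchars_def dirichlet_char_def)
  then have "(\<Sum>\<psi>\<in>dchars m. \<psi> n * cnj (\<psi> b)) = 0" by (intro sum.neutral) blast
  moreover have "\<not> (coprime b m \<and> [n = b] (mod m))"
    using False cong_imp_coprime cong_sym by blast
  ultimately show ?thesis by (subst if_not_P) blast+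
next
  case True
  then obtain b' where b': "[b * b' = 1] (mod m)" using cong_solve_coprime_nat by auto
  then have "coprime b' m" using cong_imp_coprime[OF cong_sym[OF b']] by simp
  have "\<psi> n * cnj (\<psi> b) = \<psi> (n * b')" if "\<psi> \<in> dchars m" for \<psi>
  proof -
    have \<psi>: "dirichlet_char m \<psi>" using that by (simp add: dchars_def)
    have "\<psi> b * \<psi> b' = 1"
      using \<psi> dirichlet_char_cong[OF \<psi> b'] by (simp add: dirichlet_char_def)
    then have "cnj (\<psi> b) = (cnj (\<psi> b) * \<psi> b) * \<psi> b'"
      by (simp add: mult.assoc)
    also have "\<dots> = \<psi> b'" using cnj_mult_dirichlet_char[OF \<psi>, of b] True by simp
    finally show ?thesis using \<psi> by (simp add: dirichlet_char_def)
  qed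
  then have "(\<Sum>\<psi>\<in>dchars m. \<psi> n * cnj (\<psi> b)) = (\<Sum>\<psi>\<in>dchars m. \<psi> (n * b'))"
    by (rule sum.cong[OF refl])
  also have "\<dots> = (if [n * b' = 1] (mod m) then of_nat (totient m) else 0)"
    using sum_dchars[OF assms, of "n * b'"] True \<open>coprime b' m\<close> card_dchars[OF assms] by simp
  also have "[n * b' = 1] (mod m) \<longleftrightarrow> [n = b] (mod m)"
  proof
    assume nb': "[n * b' = 1] (mod m)"
    have "[n = n * (b * b')] (mod m)" using cong_scalar_left[OF b', of n] by (simp add: cong_sym_eq)
    also have "n * (b * b') = n * b' * b" by (simp add: ac_simps)
    also have "[\<dots> = 1 * b] (mod m)" using nb' by (rule cong_scalar_right)
    finally show "[n = b] (mod m)" by simp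
  next
    assume "[n = b] (mod m)"
    then have "[n * b' = b * b'] (mod m)" by (rule cong_scalar_right)
    then show "[n * b' = 1] (mod m)" using b' cong_trans by blast
  qed
  finally show ?thesis using True by simp
qed

section \<open>The main term\<close>

lemma e_add: "e (x + y) = e x * e y"
  unfolding e_def by (simp add: cis_mult distrib_left)

lemma e_add_Ints: "n \<in> \<int> \<Longrightarrow> e (x + n) = e x"
  unfolding e_def by (simp add: distrib_left cis_mult[symmetric])

lemma norm_e [simp]: "norm (e x) = 1"
  unfolding e_def by simp

lemma cong_mult_add_1: "[d * k + 1 = 1] (mod d)" for d k :: nat
  by (simp only: cong_def add.commute[of "d * k"] mod_mult_self2)

lemma sum_supported_on_progression:
  fixes f :: "nat \<Rightarrow> 'a :: comm_monoid_add"
  assumes "d > 0" and vanish: "\<And>n. \<not> [n = 1] (mod d) \<Longrightarrow> f n = 0"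
  shows "(\<Sum>n\<in>{1..d * N + 1}. f n) = (\<Sum>k\<le>N. f (d * k + 1))"
proof -
  have "(\<lambda>k. d * k + 1) ` {..N} = {n \<in> {1..d * N + 1}. [n = 1] (mod d)}"
  proof (intro equalityI subsetI)
    fix n assume "n \<in> {n \<in> {1..d * N + 1}. [n = 1] (mod d)}"
    then have n: "1 \<le> n" "n \<le> d * N + 1" "d dvd n - 1" by (auto simp: cong_altdef_nat)
    then obtain k where k: "n = d * k + 1" by (metis dvdE le_add_diff_inverse2)
    then have "k \<le> N" using n(2) assms(1) by simp
    then show "n \<in> (\<lambda>k. d * k + 1) ` {..N}" using k by blast
  next
    fix n assume "n \<in> (\<lambda>k. d * k + 1) ` {..N}"
    then obtain k where "k \<le> N" "n = d * k + 1" by blast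
    then show "n \<in> {n \<in> {1..d * N + 1}. [n = 1] (mod d)}"
      using cong_mult_add_1[of d k] by simp
  qed
  moreover have "inj_on (\<lambda>k. d * k + 1) {..N}" using assms(1) by (intro inj_onI) simp
  ultimately have "(\<Sum>k\<le>N. f (d * k + 1)) = (\<Sum>n\<in>{n \<in> {1..d * N + 1}. [n = 1] (mod d)}. f n)"
    by (metis (no_types, lifting) sum.reindex_cong)
  also have "\<dots> = (\<Sum>n\<in>{1..d * N + 1}. f n)"
    using vanish by (intro sum.mono_neutral_left) auto
  finally show ?thesis by simp
qed

lemma sum_dchars_mult_G_sum:
  assumes "d > 0" "q > 0"
  shows "(\<Sum>\<psi>\<in>dchars (d * q). \<psi> n * G_sum a q d \<psi>) =
    (\<Sum>m<q. e (- real a * real m / real q) *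
       (if coprime (d * m + 1) (d * q) \<and> [n = d * m + 1] (mod d * q) then of_nat (totient (d * q)) else 0))"
proof -
  have "(\<Sum>\<psi>\<in>dchars (d * q). \<psi> n * G_sum a q d \<psi>) =
      (\<Sum>m<q. e (- real a * real m / real q) * (\<Sum>\<psi>\<in>dchars (d * q). \<psi> n * cnj (\<psi> (d * m + 1))))"
    unfolding G_sum_def by (simp add: sum_distrib_left sum_distrib_right sum.swap[of _ "dchars (d * q)"] ac_simps)
  then show ?thesis using assms by (simp add: dchars_orthogonality)
qed

lemma cong_progression_iff:
  fixes d k m q :: nat
  assumes "d > 0" "m < q"
  shows "[d * k + 1 = d * m + 1] (mod d * q) \<longleftrightarrow> m = k mod q"
proof -
  have "[d * k + 1 = d * m + 1] (mod d * q) \<longleftrightarrow> [d * k = d * m] (mod d * q)"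
    by (rule cong_add_rcancel_nat)
  also have "\<dots> \<longleftrightarrow> d * (k mod q) = d * (m mod q)"
    by (simp add: cong_def mod_mult_mult1)
  finally show ?thesis using assms by auto
qed

lemma e_mod_denominator:
  assumes "q > 0"
  shows "e (- real a * real (k mod q) / real q) = e (- real a * real k / real q)"
proof -
  have k: "real k = real (k mod q) + real q * real (k div q)"
    by (simp flip: of_nat_mult of_nat_add)
  have "- real a * real k / real q = - real a * real (k mod q) / real q + - real (a * (k div q))"
    using assms by (simp add: k field_simps)
  then show ?thesis by (simp only: e_add_Ints Ints_minus Ints_of_nat)
qed

lemma sum_dchars_mult_G_sum_progression:
  assumes "d > 0" "q > 0"
  shows "(\<Sum>\<psi>\<in>dchars (d * q). \<psi> (d * k + 1) * G_sum a q d \<psi>) =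
    (if coprime (d * k + 1) q then of_nat (totient (d * q)) * e (- real a * real k / real q) else 0)"
proof -
  have coprime_iff: "coprime (d * (k mod q) + 1) (d * q) \<longleftrightarrow> coprime (d * k + 1) q"
  proof -
    have "[d * k + 1 = d * (k mod q) + 1] (mod d * q)"
      using cong_progression_iff[OF assms(1), of "k mod q" q k] assms(2) by simp
    then have "coprime (d * (k mod q) + 1) (d * q) \<longleftrightarrow> coprime (d * k + 1) (d * q)"
      using cong_imp_coprime cong_sym by blast
    moreover have "coprime (d * k + 1) d"
      using cong_imp_coprime[OF cong_sym[OF cong_mult_add_1]] by simp
    ultimately show ?thesis by simp
  qed
  have "(\<Sum>\<psi>\<in>dchars (d * q). \<psi> (d * k + 1) * G_sum a q d \<psi>) =
      (\<Sum>m<q. if m = k mod q then e (- real a * real m / real q) *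
         (if coprime (d * (k mod q) + 1) (d * q) then of_nat (totient (d * q)) else 0) else 0)"
    unfolding sum_dchars_mult_G_sum[OF assms]
  proof (rule sum.cong[OF refl])
    fix m assume "m \<in> {..<q}"
    then have "m < q" by simp
    show "e (- real a * real m / real q) *
        (if coprime (d * m + 1) (d * q) \<and> [d * k + 1 = d * m + 1] (mod d * q)
         then of_nat (totient (d * q)) else 0) =
      (if m = k mod q then e (- real a * real m / real q) *
         (if coprime (d * (k mod q) + 1) (d * q) then of_nat (totient (d * q)) else 0) else 0)"
      unfolding cong_progression_iff[OF assms(1) \<open>m < q\<close>] by auto
  qed
  also have "\<dots> = e (- real a * real (k mod q) / real q) *
      (if coprime (d * (k mod q) + 1) (d * q) then of_nat (totient (d * q)) else 0)"
    using assms(2) by simp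
  finally show ?thesis
    by (simp only: coprime_iff e_mod_denominator[OF assms(2)] mult.commute mult_zero_left if_distrib)
qed

lemma sum_dchars_mult_G_sum_eq_0:
  assumes "d > 0" "q > 0" "\<not> [n = 1] (mod d)"
  shows "(\<Sum>\<psi>\<in>dchars (d * q). \<psi> n * G_sum a q d \<psi>) = 0"
proof -
  have "\<not> [n = d * m + 1] (mod d * q)" for m
  proof
    assume "[n = d * m + 1] (mod d * q)"
    then have "[n = d * m + 1] (mod d)" by (rule cong_dvd_modulus_nat) simp
    then show False using assms(3) cong_trans cong_mult_add_1 by blast
  qed
  then show ?thesis by (simp add: sum_dchars_mult_G_sum[OF assms(1,2)])
qed

lemma e_phase_progression:
  assumes "d > 0"
  shows "e (\<kappa> / real d) * e (- real (d * k + 1) * (\<kappa> / real d)) * e (- real a * real k / real q) =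
    e (- real k * (real a / real q + \<kappa>))"
proof -
  have "\<kappa> / real d + - real (d * k + 1) * (\<kappa> / real d) + - real a * real k / real q =
      - real k * (real a / real q + \<kappa>)"
    using assms by (simp add: field_simps)
  then show ?thesis by (simp flip: e_add)
qed

lemma main_term_eq_coprime_part:
  assumes "d > 0" "q > 0"
  shows "(1 / of_nat (totient (d * q))) *
      (\<Sum>\<psi>\<in>dchars (d * q). e (\<kappa> / real d) * S_sum (real (d * N + 1)) (\<kappa> / real d) \<psi> * G_sum a q d \<psi>) =
    (\<Sum>k\<le>N. if coprime (d * k + 1) q then mangoldt (d * k + 1) * e (- real k * (real a / real q + \<kappa>)) else 0)"
proof -
  define c where "c n = mangoldt n * e (\<kappa> / real d) * e (- real n * (\<kappa> / real d))" for n
  define G where "G n = (\<Sum>\<psi>\<in>dchars (d * q). \<psi> n * G_sum a q d \<psi>)" for n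
  have X: "nat \<lfloor>real (d * N + 1)\<rfloor> = d * N + 1"
    by (simp only: floor_of_nat nat_int)
  have "(\<Sum>\<psi>\<in>dchars (d * q). e (\<kappa> / real d) * S_sum (real (d * N + 1)) (\<kappa> / real d) \<psi> * G_sum a q d \<psi>) =
      (\<Sum>\<psi>\<in>dchars (d * q). \<Sum>n\<in>{1..d * N + 1}. c n * (\<psi> n * G_sum a q d \<psi>))"
    unfolding S_sum_def X c_def sum_distrib_left sum_distrib_right by (simp only: ac_simps)
  also have "\<dots> = (\<Sum>n\<in>{1..d * N + 1}. c n * G n)"
    unfolding G_def by (subst sum.swap) (simp add: sum_distrib_left)
  also have "\<dots> = (\<Sum>k\<le>N. c (d * k + 1) * G (d * k + 1))"
    using assms by (intro sum_supported_on_progression) (simp_all add: G_def sum_dchars_mult_G_sum_eq_0)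
  finally have "(1 / of_nat (totient (d * q))) *
      (\<Sum>\<psi>\<in>dchars (d * q). e (\<kappa> / real d) * S_sum (real (d * N + 1)) (\<kappa> / real d) \<psi> * G_sum a q d \<psi>) =
      (\<Sum>k\<le>N. c (d * k + 1) * G (d * k + 1) / of_nat (totient (d * q)))"
    by (simp add: sum_divide_distrib)
  also have "\<dots> = (\<Sum>k\<le>N. if coprime (d * k + 1) q
      then mangoldt (d * k + 1) * e (- real k * (real a / real q + \<kappa>)) else 0)"
  proof (rule sum.cong[OF refl])
    fix k
    show "c (d * k + 1) * G (d * k + 1) / of_nat (totient (d * q)) = (if coprime (d * k + 1) q
        then mangoldt (d * k + 1) * e (- real k * (real a / real q + \<kappa>)) else 0)"
      using assms e_phase_progression[OF assms(1), of \<kappa> k a q]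
      unfolding c_def G_def sum_dchars_mult_G_sum_progression[OF assms] by (simp add: ac_simps)
  qed
  finally show ?thesis .
qed

lemma F_hat_eq_sum_atMost: "F_hat N d \<theta> = (\<Sum>k\<le>N. mangoldt (d * k + 1) * e (- real k * \<theta>))"
  unfolding F_hat_def atMost_atLeast0 by (simp add: sum.atLeast_Suc_atMost)

section \<open>Integers not coprime to \<open>q\<close>\<close>

lemma card_prime_factors_mult_ln2_le:
  assumes "q > 0"
  shows "real (card (prime_factors q)) * ln 2 \<le> ln (real q)"
proof -
  have "(2::nat) ^ card (prime_factors q) = (\<Prod>p\<in>prime_factors q. 2)" by simp
  also have "\<dots> \<le> (\<Prod>p\<in>prime_factors q. p ^ multiplicity p q)"
  proof (rule prod_mono)
    fix p assume p: "p \<in> prime_factors q"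
    then have "2 \<le> p" "multiplicity p q > 0"
      using prime_ge_2_nat prime_factors_multiplicity by auto
    then show "0 \<le> (2::nat) \<and> 2 \<le> p ^ multiplicity p q"
      using self_le_power[of p "multiplicity p q"] by simp
  qed
  also have "\<dots> = q" using prod_prime_factors[of q] assms by simp
  finally have "real (2 ^ card (prime_factors q)) \<le> real q" by (simp only: of_nat_le_iff)
  then have "ln (real (2 ^ card (prime_factors q))) \<le> ln (real q)"
    using assms by (subst ln_le_cancel_iff) (simp_all del: of_nat_power)
  then show ?thesis by (simp add: ln_realpow)
qed

lemma sum_mangoldt_multiples_le:
  assumes p: "prime p" and "X \<ge> 1"
  shows "(\<Sum>n\<in>{1..X}. if p dvd n then mangoldt n else 0) \<le> ln (real X)"
proof -
  \<comment> \<open>the terms that survive are the powers of \<open>p\<close> up to \<open>X\<close>, which all divide \<open>p ^ J\<close>\<close>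
  define J where "J = Max {j. p ^ j \<le> X}"
  have "j \<le> X" if "p ^ j \<le> X" for j
  proof -
    have "j < 2 ^ j" by (rule less_exp)
    also have "(2::nat) ^ j \<le> p ^ j" using prime_ge_2_nat[OF p] by (rule power_mono) simp
    finally show ?thesis using that by linarith
  qed
  then have "{j. p ^ j \<le> X} \<subseteq> {..X}" by auto
  then have fin: "finite {j. p ^ j \<le> X}" by (rule finite_subset) simp
  have "J \<in> {j. p ^ j \<le> X}"
    unfolding J_def using fin assms(2) by (intro Max_in) (auto intro: exI[of _ 0])
  then have J: "p ^ J \<le> X" by simp
  have J_max: "j \<le> J" if "p ^ j \<le> X" for j
    unfolding J_def using fin that by (intro Max_ge) auto
  have dvd: "n dvd p ^ J" if "n \<in> {1..X}" "p dvd n" "mangoldt n \<noteq> (0 :: real)" for n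
  proof -
    have "primepow n" using that(3) by (auto simp: mangoldt_def split: if_splits)
    then obtain p' k where pk: "prime p'" "k > 0" "n = p' ^ k" by (auto simp: primepow_def)
    then have "p dvd p'" using that(2) prime_dvd_power[OF p] by blast
    then have "p = p'" using primes_dvd_imp_eq[OF p pk(1)] by blast
    then show ?thesis using J_max[of k] that(1) pk by (simp add: le_imp_power_dvd)
  qed
  have "(\<Sum>n\<in>{1..X}. if p dvd n then mangoldt n else 0) \<le> (\<Sum>n | n dvd p ^ J. mangoldt n :: real)"
  proof -
    have "(\<Sum>n\<in>{1..X}. if p dvd n then mangoldt n else 0) =
        (\<Sum>n\<in>{1..X} \<inter> {n. n dvd p ^ J}. if p dvd n then mangoldt n else 0 :: real)"
      using dvd by (intro sum.mono_neutral_right) auto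
    also have "\<dots> \<le> (\<Sum>n\<in>{n. n dvd p ^ J}. if p dvd n then mangoldt n else 0 :: real)"
      using p by (intro sum_mono2) (auto simp: mangoldt_nonneg prime_gt_0_nat)
    also have "\<dots> \<le> (\<Sum>n | n dvd p ^ J. mangoldt n :: real)"
      by (intro sum_mono) (simp add: mangoldt_nonneg)
    finally show ?thesis .
  qed
  also have "\<dots> = ln (real (p ^ J))"
    using mangoldt_sum[of "p ^ J", where 'a = real] p by (simp add: prime_gt_0_nat)
  also have "\<dots> \<le> ln (real X)"
    using J p assms(2) by (subst ln_le_cancel_iff) (simp_all add: prime_gt_0_nat del: of_nat_power)
  finally show ?thesis .
qed

lemma sum_mangoldt_not_coprime_le:
  assumes "q > 0" "X \<ge> 1"
  shows "(\<Sum>n\<in>{1..X}. if \<not> coprime n q then mangoldt n else 0) \<le>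
    real (card (prime_factors q)) * ln (real X)"
proof -
  have "(if \<not> coprime n q then mangoldt n else 0) \<le>
      (\<Sum>p\<in>prime_factors q. if p dvd n then mangoldt n else 0 :: real)" for n
  proof (cases "\<not> coprime n q \<and> mangoldt n \<noteq> (0 :: real)")
    case True
    then have "primepow n" by (auto simp: mangoldt_def split: if_splits)
    then obtain p k where pk: "prime p" "k > 0" "n = p ^ k" by (auto simp: primepow_def)
    then have "p \<in> prime_factors q"
      using True assms(1) prime_imp_coprime by (auto simp: in_prime_factors_iff)
    then have "(if p dvd n then mangoldt n else 0) \<le> (\<Sum>p\<in>prime_factors q. if p dvd n then mangoldt n else 0 :: real)"
      by (intro member_le_sum) (simp_all add: mangoldt_nonneg)
    then show ?thesis using True pk by simp
  qed (auto intro!: sum_nonneg simp: mangoldt_nonneg)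
  then have "(\<Sum>n\<in>{1..X}. if \<not> coprime n q then mangoldt n else 0) \<le>
      (\<Sum>n\<in>{1..X}. \<Sum>p\<in>prime_factors q. if p dvd n then mangoldt n else 0 :: real)"
    by (rule sum_mono)
  also have "\<dots> = (\<Sum>p\<in>prime_factors q. \<Sum>n\<in>{1..X}. if p dvd n then mangoldt n else 0 :: real)"
    by (rule sum.swap)
  also have "\<dots> \<le> (\<Sum>p\<in>prime_factors q. ln (real X))"
    using assms(2) by (intro sum_mono sum_mangoldt_multiples_le) (simp_all add: in_prime_factors_iff)
  finally show ?thesis by simp
qed

lemma norm_sum_not_coprime_le:
  assumes "d > 0" "q > 0"
  shows "norm (\<Sum>k\<le>N. if coprime (d * k + 1) q then 0 else mangoldt (d * k + 1) * e (- real k * \<theta>))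
    \<le> 1 / ln 2 * ln (real (d * N) + 1) * ln (real q)"
proof -
  define f where "f n = (if \<not> coprime n q then mangoldt n else 0 :: real)" for n
  have "norm (\<Sum>k\<le>N. if coprime (d * k + 1) q then 0 else mangoldt (d * k + 1) * e (- real k * \<theta>))
      \<le> (\<Sum>k\<le>N. f (d * k + 1))"
    by (rule order_trans[OF norm_sum], rule sum_mono) (simp add: f_def norm_mult)
  also have "\<dots> = (\<Sum>k\<le>N. (\<lambda>n. if [n = 1] (mod d) then f n else 0) (d * k + 1))"
    by (simp only: cong_mult_add_1 if_True)
  also have "\<dots> = (\<Sum>n\<in>{1..d * N + 1}. if [n = 1] (mod d) then f n else 0)"
    by (rule sum_supported_on_progression[symmetric]) (use assms(1) in auto)
  also have "\<dots> \<le> (\<Sum>n\<in>{1..d * N + 1}. f n)"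
    by (intro sum_mono) (simp add: f_def mangoldt_nonneg)
  also have "\<dots> \<le> real (card (prime_factors q)) * ln (real (d * N) + 1)"
    using sum_mangoldt_not_coprime_le[OF assms(2), of "d * N + 1"] by (simp add: f_def add.commute)
  also have "\<dots> \<le> ln (real q) / ln 2 * ln (real (d * N) + 1)"
    using card_prime_factors_mult_ln2_le[OF assms(2)] by (intro mult_right_mono) (simp_all add: field_simps)
  finally show ?thesis by (simp add: mult_ac)
qed

theorem lemma4p2:
  "\<exists>C::real. \<forall>(N::nat) (a::nat) (d::nat) (q::nat) (\<kappa>::real).
     N > 0 \<longrightarrow> a > 0 \<longrightarrow> d > 0 \<longrightarrow> q > 0 \<longrightarrow> -1/2 \<le> \<kappa> \<longrightarrow> \<kappa> \<le> 1/2 \<longrightarrow>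
     norm (F_hat N d (real a / real q + \<kappa>)
        - (1 / of_nat (totient (d * q))) *
          (\<Sum>\<psi>\<in>dchars (d * q).
             e (\<kappa> / real d) * S_sum (real (d * N + 1)) (\<kappa> / real d) \<psi> * G_sum a q d \<psi>))
     \<le> C * ln (real (d * N) + 1) * ln (real q)"
proof (intro exI[of _ "1 / ln 2"] allI impI)
  fix N a d q :: nat and \<kappa> :: real
  assume d: "d > 0" and q: "q > 0"
  have "F_hat N d (real a / real q + \<kappa>) - (1 / of_nat (totient (d * q))) *
      (\<Sum>\<psi>\<in>dchars (d * q). e (\<kappa> / real d) * S_sum (real (d * N + 1)) (\<kappa> / real d) \<psi> * G_sum a q d \<psi>)
    = (\<Sum>k\<le>N. if coprime (d * k + 1) q then 0
        else mangoldt (d * k + 1) * e (- real k * (real a / real q + \<kappa>)))"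
    unfolding F_hat_eq_sum_atMost main_term_eq_coprime_part[OF d q] sum_subtractf[symmetric]
    by (simp add: if_distrib[of "\<lambda>x. _ - x"] cong: if_cong)
  then show "norm (F_hat N d (real a / real q + \<kappa>) - (1 / of_nat (totient (d * q))) *
      (\<Sum>\<psi>\<in>dchars (d * q). e (\<kappa> / real d) * S_sum (real (d * N + 1)) (\<kappa> / real d) \<psi> * G_sum a q d \<psi>))
      \<le> 1 / ln 2 * ln (real (d * N) + 1) * ln (real q)"
    using norm_sum_not_coprime_le[OF d q] by simp
qed

end
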